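(* Let $F$ be Richard Thompson's group with standard generators $x_0,x_1,x_2,\ldots$. Let $k\ge1$, let $i_1,\ldots,i_k$ be even nonnegative integers, let $j_1,\ldots,j_k$ be odd positive integers, and let $\epsilon_1,\delta_1,\ldots,\epsilon_k,\delta_k\in\{1,-1\}$. Then the word $x_{i_1}^{\epsilon_1}x_{j_1}^{\delta_1}x_{i_2}^{\epsilon_2}x_{j_2}^{\delta_2}\cdots x_{i_k}^{\epsilon_k}x_{j_k}^{\delta_k}$ does not represent the identity element of $F$.
   Context: Thompson's group $F$ is the group given by the presentation $\langle x_0,x_1,x_2,\ldots \mid x_jx_i=x_ix_{j+1}\ (0\le i<j)\rangle$. *)

theory Defs
  imports Main
begin

text \<open>Words over the generators x_0, x_1, ... of Thompson's group F.
  A letter (n, True) stands for x_n, and (n, False) for x_n^{-1}.\<close>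

type_synonym letter = "nat \<times> bool"

inductive F_eq :: "letter list \<Rightarrow> letter list \<Rightarrow> bool" where
  F_refl: "F_eq w w"
| F_sym: "F_eq u v \<Longrightarrow> F_eq v u"
| F_trans: "F_eq u v \<Longrightarrow> F_eq v w \<Longrightarrow> F_eq u w"
| F_cancel: "F_eq (u @ [(n, b), (n, \<not> b)] @ v) (u @ v)"
| F_rel: "i < j \<Longrightarrow> F_eq (u @ [(j, True), (i, True)] @ v) (u @ [(i, True), (Suc j, True)] @ v)"

definition letter_pow :: "nat \<Rightarrow> int \<Rightarrow> letter" where
  "letter_pow n e = (n, e = 1)"

end

theory Submission
  imports Defs "HOL-Library.Stream" "HOL-Library.Product_Lexorder"
begin

text \<open>F acts on infinite binary sequences: x_0 maps 0s to 00s, 10s to 01s and 11s to 1s,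
  and x_(n+1) acts as x_n behind a leading 1 and fixes sequences starting with 0.  Suppose a nonempty
  word w whose letter indices alternate in parity acts trivially.  Acting on 0^z 1^omega for large z
  shows that the exponent sum of x_0 in w vanishes.  If x_0 occurs in w, conjugating by a power of
  x_0 and pushing it through the word with x_0^-1 x_n = x_(n+1) x_0^-1 deletes every x_0 and shifts
  the other indices; the parity pattern survives and the word stays nonempty because an alternating
  word consisting of x_0 letters has length at most one.  If x_0 does not occur, restricting to
  sequences starting with 1 lowers every index by one.  Induction on the length and then on the sum
  of the indices yields a contradiction.\<close>

fun gen :: "nat \<Rightarrow> bool \<Rightarrow> bool stream \<Rightarrow> bool stream" where
  "gen 0 True (False ## s) = False ## False ## s"
| "gen 0 True (True ## False ## s) = False ## True ## s"
| "gen 0 True (True ## True ## s) = True ## s"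
| "gen 0 False (False ## False ## s) = False ## s"
| "gen 0 False (False ## True ## s) = True ## False ## s"
| "gen 0 False (True ## s) = True ## True ## s"
| "gen (Suc n) b (True ## s) = True ## gen n b s"
| "gen (Suc n) b (False ## s) = False ## s"

lemma stream_cases2:
  obtains a c t where "s = a ## c ## t"
  by (metis stream.collapse)

lemma gen_inverse: "gen n (\<not> b) (gen n b s) = s"
proof (induction n arbitrary: s)
  case 0
  obtain a c t where "s = a ## c ## t" by (rule stream_cases2)
  then show ?case by (cases a; cases b; cases c) auto
next
  case (Suc n)
  obtain a t where "s = a ## t" by (metis stream.collapse)
  with Suc show ?case by (cases a) auto
qed

lemma gen_relation: "i < j \<Longrightarrow> gen j True (gen i True s) = gen i True (gen (Suc j) True s)"
proof (induction i arbitrary: j s)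
  case 0
  then obtain j' where "j = Suc j'" by (cases j) auto
  moreover obtain a c t where "s = a ## c ## t" by (rule stream_cases2)
  ultimately show ?case by (cases a; cases c) auto
next
  case (Suc i)
  then obtain j' where "j = Suc j'" "i < j'" by (cases j) auto
  moreover obtain a t where "s = a ## t" by (metis stream.collapse)
  ultimately show ?case using Suc.IH by (cases a) auto
qed

lemma gen_0_False_commute: "gen 0 False (gen (Suc n) b s) = gen (Suc (Suc n)) b (gen 0 False s)"
proof -
  obtain a c t where "s = a ## c ## t" by (rule stream_cases2)
  then show ?thesis by (cases a; cases c) auto
qed

lemma bij_gen: "bij (gen n b)"
  by (rule o_bij[of "gen n (\<not> b)"]) (auto simp: fun_eq_iff gen_inverse gen_inverse[of n "\<not> b", simplified])

primrec act :: "letter list \<Rightarrow> bool stream \<Rightarrow> bool stream" where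
  "act [] = id"
| "act (x # w) = gen (fst x) (snd x) \<circ> act w"

lemma act_append: "act (u @ v) = act u \<circ> act v"
  by (induction u) auto

lemma F_eq_imp_act_eq: "F_eq u v \<Longrightarrow> act u = act v"
proof (induction rule: F_eq.induct)
  case (F_cancel u n b v)
  then show ?case by (simp add: act_append fun_eq_iff gen_inverse[of n "\<not> b", simplified])
next
  case (F_rel i j u v)
  then show ?case by (simp add: act_append fun_eq_iff gen_relation)
qed auto

fun x0_exponent :: "letter list \<Rightarrow> int" where
  "x0_exponent [] = 0"
| "x0_exponent (x # w) = (if fst x = 0 then (if snd x then 1 else -1) else 0) + x0_exponent w"

lemma abs_x0_exponent_le: "\<bar>x0_exponent w\<bar> \<le> int (length w)"
  by (induction w) auto

definition zeros_ones :: "int \<Rightarrow> bool stream" where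
  "zeros_ones z = replicate (nat z) False @- sconst True"

lemma snth_zeros_ones: "zeros_ones z !! k \<longleftrightarrow> z \<le> int k"
  by (auto simp: zeros_ones_def shift_snth)

lemma zeros_ones_eqD: "zeros_ones y = zeros_ones z \<Longrightarrow> 0 \<le> y \<Longrightarrow> 0 \<le> z \<Longrightarrow> y = z"
  by (metis snth_zeros_ones nat_0_le order.refl order.antisym)

lemma zeros_ones_pos: "0 < z \<Longrightarrow> zeros_ones z = False ## zeros_ones (z - 1)"
proof -
  assume "0 < z"
  then obtain n where "nat z = Suc n" by (metis gr0_implies_Suc zero_less_nat_eq)
  then show ?thesis by (simp add: zeros_ones_def nat_diff_distrib')
qed

lemma gen_zeros_ones:
  "2 \<le> z \<Longrightarrow> gen n b (zeros_ones z) = zeros_ones (z + (if n = 0 then (if b then 1 else -1) else 0))"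
  by (cases n; cases b) (simp_all add: zeros_ones_pos[of z] zeros_ones_pos[of "z - 1"] zeros_ones_pos[of "z + 1"])

lemma act_zeros_ones:
  "int (length w) + 2 \<le> z \<Longrightarrow> act w (zeros_ones z) = zeros_ones (z + x0_exponent w)"
proof (induction w)
  case (Cons x w)
  then show ?case
    using abs_x0_exponent_le[of w] by (simp add: gen_zeros_ones algebra_simps)
qed simp

lemma x0_exponent_eq_0: "act w = id \<Longrightarrow> x0_exponent w = 0"
  using act_zeros_ones[of w "int (length w) + 2"] abs_x0_exponent_le[of w]
  by (auto dest: zeros_ones_eqD)

text \<open>drop_x0 c w is what remains of x_0^-c w after pushing the x_0-power through w to the right:
  each x_0^(+-1) changes its exponent, every other x_n becomes x_(n+c) for the current exponent c.\<close>

fun drop_x0 :: "nat \<Rightarrow> letter list \<Rightarrow> letter list" where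
  "drop_x0 c [] = []"
| "drop_x0 c (x # w) = (if fst x = 0 then drop_x0 (if snd x then c - 1 else Suc c) w
                        else (fst x + c, snd x) # drop_x0 c w)"

lemma funpow_gen_0_False_commute:
  "(gen 0 False ^^ c) (gen (Suc n) b s) = gen (Suc n + c) b ((gen 0 False ^^ c) s)"
  by (induction c) (simp_all add: gen_0_False_commute)

lemma funpow_gen_0_False_act:
  "length w \<le> c \<Longrightarrow>
    (gen 0 False ^^ c) (act w s) = act (drop_x0 c w) ((gen 0 False ^^ nat (int c - x0_exponent w)) s)"
proof (induction w arbitrary: c)
  case (Cons x w)
  let ?f = "gen 0 False"
  obtain n b where x: "x = (n, b)" by fastforce
  consider "n = 0" "b" | "n = 0" "\<not> b" | m where "n = Suc m" by (cases n) auto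
  then show ?case
  proof cases
    case 1
    then obtain c' where c: "c = Suc c'" using Cons.prems by (cases c) auto
    have "(?f ^^ c) (act (x # w) s) = (?f ^^ c') (?f (gen 0 True (act w s)))"
      by (simp add: x 1 c funpow_Suc_right del: funpow.simps)
    also have "\<dots> = act (drop_x0 c' w) ((?f ^^ nat (int c' - x0_exponent w)) s)"
      using Cons c gen_inverse[of 0 True] by simp
    finally show ?thesis by (simp add: x 1 c)
  next
    case 2
    have "(?f ^^ c) (act (x # w) s) = (?f ^^ Suc c) (act w s)"
      by (simp add: x 2 funpow_Suc_right del: funpow.simps)
    also have "\<dots> = act (drop_x0 (Suc c) w) ((?f ^^ nat (int (Suc c) - x0_exponent w)) s)"
      using Cons.IH[of "Suc c"] Cons.prems by (simp del: funpow.simps)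
    finally show ?thesis by (simp add: x 2 algebra_simps del: funpow.simps)
  next
    case 3
    then show ?thesis using Cons by (simp add: x funpow_gen_0_False_commute)
  qed
qed simp

lemma act_drop_x0_eq_id: "act w = id \<Longrightarrow> act (drop_x0 (length w) w) = id"
proof -
  assume trivial: "act w = id"
  define f where "f = gen 0 False ^^ length w"
  have "f = act (drop_x0 (length w) w) \<circ> f"
    using funpow_gen_0_False_act[of w "length w"] trivial x0_exponent_eq_0[OF trivial]
    by (simp add: f_def fun_eq_iff)
  moreover have "surj f" using bij_fn[OF bij_gen] by (simp add: f_def bij_is_surj)
  ultimately show ?thesis by (metis surj_fun_eq id_comp)
qed

lemma length_drop_x0_less: "(0, b) \<in> set w \<Longrightarrow> length (drop_x0 c w) < length w"
proof (induction w arbitrary: c)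
  case (Cons x w)
  have "length (drop_x0 c' w) \<le> length w" for c'
    by (induction w arbitrary: c') (simp_all add: le_SucI)
  with Cons show ?case by (auto simp: less_SucI le_imp_less_Suc)
qed simp

lemma drop_x0_eq_Nil_iff: "drop_x0 c w = [] \<longleftrightarrow> (\<forall>x \<in> set w. fst x = 0)"
  by (induction w arbitrary: c) auto

fun alternating :: "nat \<Rightarrow> letter list \<Rightarrow> bool" where
  "alternating b [] = True"
| "alternating b (x # w) = (even (fst x + b) \<and> alternating (Suc b) w)"

lemma alternating_add_even: "even m \<Longrightarrow> alternating (b + m) w = alternating b w"
proof (induction w arbitrary: b)
  case (Cons x w)
  then show ?case using Cons.IH[of "Suc b"] by (simp add: add.assoc)
qed simp

lemma alternating_append:
  "alternating b (u @ v) \<longleftrightarrow> alternating b u \<and> alternating (b + length u) v"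
  by (induction u arbitrary: b) auto

lemma alternating_concat:
  "\<forall>u \<in> set us. alternating 0 u \<and> even (length u) \<Longrightarrow> alternating 0 (concat us)"
proof (induction us)
  case (Cons u us)
  then show ?case using alternating_add_even[of "length u" 0 "concat us"] by (simp add: alternating_append)
qed simp

lemma alternating_drop_x0:
  "length w \<le> c \<Longrightarrow> alternating b w \<Longrightarrow> alternating (b + c) (drop_x0 c w)"
proof (induction w arbitrary: b c)
  case (Cons x w)
  obtain n s where x: "x = (n, s)" by fastforce
  consider "n = 0" "s" | "n = 0" "\<not> s" | "0 < n" by auto
  then show ?case
  proof cases
    case 1
    then obtain c' where c: "c = Suc c'" using Cons.prems by (cases c) auto
    have "alternating (Suc b + c') (drop_x0 c' w)" using Cons.IH[of c' "Suc b"] Cons.prems c x by simp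
    then show ?thesis by (simp add: x 1 c)
  next
    case 2
    have "alternating (Suc b + Suc c) (drop_x0 (Suc c) w)"
      using Cons.IH[of "Suc c" "Suc b"] Cons.prems x by simp
    then have "alternating (b + c) (drop_x0 (Suc c) w)"
      using alternating_add_even[of 2 "b + c"] by simp
    then show ?thesis by (simp add: x 2)
  next
    case 3
    have "alternating (Suc b + c) (drop_x0 c w)" using Cons.IH[of c "Suc b"] Cons.prems x by simp
    moreover have "even (n + c + (b + c))" using Cons.prems x by simp
    moreover have "drop_x0 c (x # w) = (n + c, s) # drop_x0 c w" using 3 by (simp add: x)
    ultimately show ?thesis by (simp only: alternating.simps fst_conv add_Suc)
  qed
qed simp

lemma alternating_x0_only:
  assumes "alternating b w" and "\<forall>x \<in> set w. fst x = 0" and "x0_exponent w = 0"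
  shows "w = []"
proof (rule ccontr)
  assume "w \<noteq> []"
  then obtain x v where w: "w = x # v" by (cases w) auto
  have "v = []" using assms(1,2) w by (cases v) auto
  then show False using assms(2,3) w by (auto split: if_splits)
qed

definition lower :: "letter list \<Rightarrow> letter list" where
  "lower w = map (\<lambda>(n, b). (n - 1, b)) w"

lemma act_True_Cons:
  "\<forall>x \<in> set w. 0 < fst x \<Longrightarrow> act w (True ## s) = True ## act (lower w) s"
proof (induction w)
  case (Cons x w)
  then obtain m b where "x = (Suc m, b)" by (metis gr0_implies_Suc prod.collapse list.set_intros(1))
  with Cons show ?case by (simp add: lower_def)
qed (simp add: lower_def)

lemma act_lower_eq_id: "\<forall>x \<in> set w. 0 < fst x \<Longrightarrow> act w = id \<Longrightarrow> act (lower w) = id"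
  by (rule ext) (metis act_True_Cons id_apply stream.inject)

lemma alternating_lower: "\<forall>x \<in> set w. 0 < fst x \<Longrightarrow> alternating b w \<Longrightarrow> alternating (Suc b) (lower w)"
proof (induction w arbitrary: b)
  case (Cons x w)
  then have "even (fst x - 1 + Suc b)" by (cases "fst x") auto
  with Cons show ?case by (auto simp: lower_def split: prod.splits)
qed (simp add: lower_def)

lemma sum_indices_lower:
  "\<forall>x \<in> set w. 0 < fst x \<Longrightarrow> sum_list (map fst (lower w)) + length w = sum_list (map fst w)"
  by (induction w) (auto simp: lower_def split: prod.splits)

lemma alternating_act_neq_id: "w \<noteq> [] \<Longrightarrow> alternating b w \<Longrightarrow> act w \<noteq> id"
proof (induction "(length w, sum_list (map fst w))" arbitrary: w b rule: less_induct)
  case less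
  show ?case
  proof
    assume trivial: "act w = id"
    show False
    proof (cases "\<exists>b. (0, b) \<in> set w")
      case True
      let ?v = "drop_x0 (length w) w"
      have "?v \<noteq> []"
        using less.prems alternating_x0_only x0_exponent_eq_0[OF trivial] drop_x0_eq_Nil_iff by blast
      moreover have "length ?v < length w" using True length_drop_x0_less by blast
      moreover have "alternating (b + length w) ?v" using alternating_drop_x0 less.prems by simp
      ultimately show False using less.hyps act_drop_x0_eq_id[OF trivial] by fastforce
    next
      case False
      then have pos: "\<forall>x \<in> set w. 0 < fst x" by (metis gr0I prod.collapse)
      have "sum_list (map fst (lower w)) < sum_list (map fst w)"
        using sum_indices_lower[OF pos] less.prems(1) by (cases w) auto
      moreover have "lower w \<noteq> []" "length (lower w) = length w"
        using less.prems(1) by (simp_all add: lower_def)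
      moreover have "alternating (Suc b) (lower w)" using alternating_lower pos less.prems by blast
      ultimately show False using less.hyps act_lower_eq_id[OF pos trivial] by fastforce
    qed
  qed
qed

theorem lemma3:
  fixes k :: nat and i j :: "nat \<Rightarrow> nat" and eps delta :: "nat \<Rightarrow> int"
  assumes "k \<ge> 1"
    and "\<And>t. 1 \<le> t \<Longrightarrow> t \<le> k \<Longrightarrow> even (i t)"
    and "\<And>t. 1 \<le> t \<Longrightarrow> t \<le> k \<Longrightarrow> odd (j t)"
    and "\<And>t. 1 \<le> t \<Longrightarrow> t \<le> k \<Longrightarrow> eps t \<in> {1, -1}"
    and "\<And>t. 1 \<le> t \<Longrightarrow> t \<le> k \<Longrightarrow> delta t \<in> {1, -1}"
  shows "\<not> F_eq (concat (map (\<lambda>t. [letter_pow (i t) (eps t), letter_pow (j t) (delta t)]) [1..<Suc k])) []"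
proof
  define w where "w = concat (map (\<lambda>t. [letter_pow (i t) (eps t), letter_pow (j t) (delta t)]) [1..<Suc k])"
  assume "F_eq w []"
  then have "act w = id" by (simp add: F_eq_imp_act_eq)
  moreover have "w \<noteq> []" using assms(1) by (simp add: w_def)
  moreover have "alternating 0 w" unfolding w_def
    by (rule alternating_concat) (auto simp: letter_pow_def assms(2,3))
  ultimately show False using alternating_act_neq_id by blast
qed

end
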